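(* Let $v\in C^1([0,T];C^1(\mathcal K^* ))$ and $B\in C([0,T];C^0(\mathcal K^* ))$ solve the discrete incompressible Euler equations $\frac{dv}{dt}+I_v(\tilde D_1v)+\tilde D_0B=0$, $D_2M_1v=0$. Then the discrete kinetic energy $E^{\rm kin}(t)=\frac12\langle v,v\rangle_1=\frac12\sum_j\frac{A_j}{\ell_j^*}v_j^2$ is constant in time: $\frac{dE^{\rm kin}}{dt}=0$.
   Context: $C^k(\mathcal K^* )$ denotes real dual $k$-cochains on a Delaunay–Voronoi cell complex; velocity $v$ has one value per dual edge $e_j^*$ of length $\ell_j^*$, dual to primal face $f_j$ of area $A_j$. $M_1$ is the positive diagonal matrix with $(M_1)_{jj}=A_j/\ell_j^*$, $\langle v,w\rangle_1=v^TM_1w$. $\tilde D_0,\tilde D_1$ are dual coboundary matrices, $D_2$ the primal coboundary from faces to cells, satisfying summation by parts $\langle\tilde D_0B,v\rangle_1=B^TD_2M_1v$. The contraction $I_v:C^2(\mathcal K^* )\to C^1(\mathcal K^* )$ is defined by $M_1I_v(\omega)=\frac12(\tilde U(v)\omega-\tilde D_1^T\tilde U(v)^Tv)$, where $\tilde U(v)$ is a matrix (of the shape of $\tilde D_1^T$) depending linearly on $v$. *)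

theory Defs
  imports "HOL-Analysis.Analysis"
begin

text \<open>Dual cochains as Cartesian vectors: index type 'c = dual vertices (primal cells),
 'e = dual edges (primal faces), 'f = dual faces (primal edges).
 The mass matrix M_1 = diag(A_j / l_j).\<close>

definition M1 :: "('e::finite \<Rightarrow> real) \<Rightarrow> ('e \<Rightarrow> real) \<Rightarrow> real^'e^'e" where
  "M1 A l = (\<chi> i j. if i = j then A j / l j else 0)"

definition ip1 :: "('e::finite \<Rightarrow> real) \<Rightarrow> ('e \<Rightarrow> real) \<Rightarrow> real^'e \<Rightarrow> real^'e \<Rightarrow> real" where
  "ip1 A l v w = v \<bullet> (M1 A l *v w)"

definition contraction ::
  "('e::finite \<Rightarrow> real) \<Rightarrow> ('e \<Rightarrow> real) \<Rightarrow> real^'e^('f::finite) \<Rightarrow> (real^'e \<Rightarrow> real^'f^'e)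
     \<Rightarrow> real^'e \<Rightarrow> real^'f \<Rightarrow> real^'e" where
  "contraction A l D1 U v \<omega> =
     matrix_inv (M1 A l) *v ((1/2) *\<^sub>R (U v *v \<omega> - transpose D1 *v (transpose (U v) *v v)))"

definition Ekin :: "('e::finite \<Rightarrow> real) \<Rightarrow> ('e \<Rightarrow> real) \<Rightarrow> real^'e \<Rightarrow> real" where
  "Ekin A l v = (1/2) * ip1 A l v v"

end

theory Submission
  imports Defs
begin

(* Since M1 is symmetric, d/dt (1/2)<v,v>_1 = <v, dv/dt>_1, and the Euler equation turns this
   into -<v, I_v(D1 v)>_1 - <v, D0 B>_1. The first term vanishes because
   <v, I_v w>_1 = (1/2)(v^T U(v) w - (D1 v)^T U(v)^T v), which is zero for w = D1 v;
   the second vanishes by summation by parts and D2 M1 v = 0. *)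

lemma matrix_inv_right:
  fixes M :: "'a::semiring_1^'n^'m"
  assumes "invertible M"
  shows "M ** matrix_inv M = mat 1"
  using someI_ex[OF assms[unfolded invertible_def]] unfolding matrix_inv_def by blast

lemma M1_transpose: "transpose (M1 A l) = M1 A l"
  by (auto simp: M1_def transpose_def vec_eq_iff)

lemma M1_mult_M1_swap:
  assumes "\<And>j. A j \<noteq> 0" and "\<And>j. l j \<noteq> 0"
  shows "M1 A l ** M1 l A = mat 1"
proof -
  have "(M1 A l ** M1 l A) $ i $ j = mat 1 $ i $ j" for i j
  proof -
    have "(M1 A l ** M1 l A) $ i $ j
        = (\<Sum>k\<in>UNIV. (if i = k then A k / l k else 0) * (if k = j then l j / A j else 0))"
      by (simp add: matrix_matrix_mult_def M1_def)
    also have "\<dots> = (if i = j then A j / l j * (l j / A j) else 0)"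
      by (simp add: if_distrib[of "\<lambda>x. x * _"] sum.delta cong: if_cong)
    also have "\<dots> = mat 1 $ i $ j"
      using assms[of j] by (simp add: mat_def)
    finally show ?thesis .
  qed
  then show ?thesis
    by (simp add: vec_eq_iff)
qed

lemma invertible_M1:
  assumes "\<And>j. A j \<noteq> 0" and "\<And>j. l j \<noteq> 0"
  shows "invertible (M1 A l)"
  unfolding invertible_def using M1_mult_M1_swap assms by metis

lemma ip1_commute: "ip1 A l v w = ip1 A l w v"
  unfolding ip1_def
  by (metis M1_transpose dot_lmul_matrix inner_commute vector_transpose_matrix)

lemma ip1_add_right: "ip1 A l v (w + w') = ip1 A l v w + ip1 A l v w'"
  by (simp add: ip1_def matrix_vector_right_distrib inner_add_right)

lemma inner_vector_matrix_mult_right: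
  fixes M :: "real^'n^'m"
  shows "x \<bullet> (y v* M) = (M *v x) \<bullet> y"
  by (metis dot_lmul_matrix inner_commute)

lemma ip1_contraction:
  assumes "\<And>j. A j \<noteq> 0" and "\<And>j. l j \<noteq> 0"
  shows "ip1 A l v (contraction A l D1 U w \<omega>)
    = (1/2) * (v \<bullet> (U w *v \<omega>) - (D1 *v v) \<bullet> (transpose (U w) *v w))"
proof -
  have "M1 A l *v contraction A l D1 U w \<omega>
      = (1/2) *\<^sub>R (U w *v \<omega> - transpose D1 *v (transpose (U w) *v w))"
    unfolding contraction_def matrix_vector_mul_assoc matrix_inv_right[OF invertible_M1[OF assms]]
    by simp
  then show ?thesis
    by (simp add: ip1_def inner_diff_right inner_vector_matrix_mult_right)
qed

lemma ip1_contraction_vorticity_eq_0: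
  assumes "\<And>j. A j \<noteq> 0" and "\<And>j. l j \<noteq> 0"
  shows "ip1 A l v (contraction A l D1 U v (D1 *v v)) = 0"
  unfolding ip1_contraction[OF assms]
  by (simp add: inner_vector_matrix_mult_right inner_commute)

lemma has_real_derivative_Ekin:
  assumes "(v has_vector_derivative v') (at t within S)"
  shows "((\<lambda>s. Ekin A l (v s)) has_real_derivative ip1 A l (v t) v') (at t within S)"
proof -
  let ?M = "M1 A l"
  have dv: "(v has_derivative (\<lambda>h. h *\<^sub>R v')) (at t within S)"
    using assms by (simp add: has_vector_derivative_def)
  have "((\<lambda>s. v s \<bullet> (?M *v v s)) has_derivative
      (\<lambda>h. v t \<bullet> (?M *v (h *\<^sub>R v')) + (h *\<^sub>R v') \<bullet> (?M *v v t))) (at t within S)"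
    by (intro derivative_intros dv bounded_linear.has_derivative[OF matrix_vector_mul_bounded_linear])
  moreover have "(\<lambda>h. v t \<bullet> (?M *v (h *\<^sub>R v')) + (h *\<^sub>R v') \<bullet> (?M *v v t))
      = (\<lambda>h. h * (2 * ip1 A l (v t) v'))"
    using ip1_commute[of A l v' "v t"]
    by (simp add: ip1_def matrix_vector_mult_scaleR algebra_simps)
  ultimately have "((\<lambda>s. (1/2) * (v s \<bullet> (?M *v v s))) has_derivative
      (\<lambda>h. (1/2) * (h * (2 * ip1 A l (v t) v')))) (at t within S)"
    by (intro derivative_intros) simp
  then show ?thesis
    by (simp add: Ekin_def ip1_def has_field_derivative_def mult_commute_abs)
qed

theorem theorem3p3:
  fixes A l :: "'e::finite \<Rightarrow> real"
    and D0 :: "real^('c::finite)^'e"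
    and D1 :: "real^'e^('f::finite)"
    and D2 :: "real^'e^'c"
    and U :: "real^'e \<Rightarrow> real^'f^'e"
    and T :: real
    and v v' :: "real \<Rightarrow> real^'e"
    and B :: "real \<Rightarrow> real^'c"
  assumes A_pos: "\<And>j. A j > 0"
    and l_pos: "\<And>j. l j > 0"
    and sbp: "\<And>b w. ip1 A l (D0 *v b) w = b \<bullet> (D2 *v (M1 A l *v w))"
    and U_lin: "linear U"
    and v_deriv: "\<And>t. t \<in> {0..T} \<Longrightarrow> (v has_vector_derivative v' t) (at t within {0..T})"
    and v'_cont: "continuous_on {0..T} v'"
    and B_cont: "continuous_on {0..T} B"
    and euler: "\<And>t. t \<in> {0..T} \<Longrightarrow>
        v' t + contraction A l D1 U (v t) (D1 *v v t) + D0 *v B t = 0"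
    and incompressible: "\<And>t. t \<in> {0..T} \<Longrightarrow> D2 *v (M1 A l *v v t) = 0"
  shows "\<And>t. t \<in> {0..T} \<Longrightarrow> ((\<lambda>s. Ekin A l (v s)) has_real_derivative 0) (at t within {0..T})"
proof -
  fix t assume t: "t \<in> {0..T}"
  have A_nz: "A j \<noteq> 0" and l_nz: "l j \<noteq> 0" for j
    using A_pos[of j] l_pos[of j] by simp_all
  have pressure_work: "ip1 A l (v t) (D0 *v B t) = 0"
    using sbp[of "B t" "v t"] incompressible[OF t] ip1_commute[of A l "v t"] by simp
  have "ip1 A l (v t) (v' t + contraction A l D1 U (v t) (D1 *v v t) + D0 *v B t) = 0"
    using euler[OF t] by (simp add: ip1_def)
  then have "ip1 A l (v t) (v' t) = 0"
    using pressure_work by (simp add: ip1_add_right ip1_contraction_vorticity_eq_0[of A l, OF A_nz l_nz])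
  then show "((\<lambda>s. Ekin A l (v s)) has_real_derivative 0) (at t within {0..T})"
    using has_real_derivative_Ekin[OF v_deriv[OF t], of A l] by simp
qed

end
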